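(* Let $\Gamma=(\mathcal{G},\mathcal{I},\boldsymbol{c})$ be a nonatomic routing game and suppose there is $\beta\in\mathbb{R}_+$ such that every edge $e\in\mathcal{E}$ has a BPR-type cost function $c_e(x)=t_e+a_e x^{\beta}$ with $t_e,a_e\in\mathbb{R}_+$. Let $\boldsymbol{\tau}\in\mathbb{R}^{\mathcal{E}}$ be a toll vector such that $$\sum_{e\in p}\Bigl(\tau_e+\tfrac{\beta}{\beta+1}t_e\Bigr)\le \sum_{e\in p'}\Bigl(\tau_e+\tfrac{\beta}{\beta+1}t_e\Bigr)$$ for all $i\in\mathcal{I}$, all $p\in\mathcal{P}^{*i}$ and all $p'\in\mathcal{P}^i$. Then $\boldsymbol{\tau}$ is a demand-independent optimal toll (DIOT) for $\Gamma$.
   Context: A nonatomic routing game $\Gamma=(\mathcal{G},\mathcal{I},\boldsymbol{c})$ consists of a finite directed multigraph $\mathcal{G}=(\mathcal{V},\mathcal{E})$, a finite set $\mathcal{I}$ of origin-destination (OD) pairs $i$, each with origin $o^i\in\mathcal{V}$ and destination $d^i\in\mathcal{V}$, and for each edge $e$ a nondecreasing continuous cost function $c_e:\mathbb{R}_+\to\mathbb{R}_+$. $\mathcal{P}^i$ is the set of simple directed $o^i$–$d^i$ paths, $\mathcal{P}=\bigcup_i\mathcal{P}^i$. For a demand vector $\boldsymbol{\mu}\in\mathbb{R}_+^{\mathcal{I}}$, the feasible flows are $\mathcal{F}(\boldsymbol{\mu})=\{\boldsymbol{f}\in\mathbb{R}_+^{\mathcal{P}}:\sum_{p\in\mathcal{P}^i}f_p=\mu^i\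 \forall i\}$; the load on $e$ is $x_e=\sum_{p\ni e}f_p$, and the path cost is $c_p(\boldsymbol{f})=\sum_{e\in p}c_e(x_e)$. A flow $\boldsymbol{f}\in\mathcal{F}(\boldsymbol{\mu})$ is a Wardrop equilibrium if for all $i$ and all $p,p'\in\mathcal{P}^i$ with $f_p>0$, $c_p(\boldsymbol{f})\le c_{p'}(\boldsymbol{f})$. The total cost is $L(\boldsymbol{f})=\sum_{p}f_pc_p(\boldsymbol{f})$; a system optimum for $\boldsymbol{\mu}$ is a minimizer of $L$ over $\mathcal{F}(\boldsymbol{\mu})$. $\mathcal{P}^{*i}$ is the set of paths $p\in\mathcal{P}^i$ such that $f^*_p(\boldsymbol{\mu})>0$ for some demand vector $\boldsymbol{\mu}$ and some corresponding system optimum $\boldsymbol{f}^*(\boldsymbol{\mu})$. For a toll vector $\boldsymbol{\tau}\in\mathbb{R}^{\mathcal{E}}$ (entries may be negative), $\Gamma^{\boldsymbol{\tau}}$ is the game with edge costs $c_e(x)+\tau_e$. A toll vector $\boldsymbol{\tau}$ is a demand-independent optimal toll (DIOT) for $\Gamma$ if for every demand vector $\boldsymbol{\mu}\in\mathbb{R}_+^{\mathcal{I}}$, every Wardrop equilibrium of $\Gamma^{\boldsymbol{\tau}}$ with demand $\boldsymbol{\mu}$ is a system optimum of $\Gamma$ for demand $\boldsymbol{\mu}$ (i.e., minimizes $L$, computed with the untolled costs, over $\mathcal{F}(\boldsymbol{\mu})$). *)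

theory Defs
  imports Complex_Main
begin

record ('v, 'e, 'i) network =
  verts :: "'v set"
  edges :: "'e set"
  etail :: "'e \<Rightarrow> 'v"
  ehead :: "'e \<Rightarrow> 'v"
  ods   :: "'i set"
  orig  :: "'i \<Rightarrow> 'v"
  dest  :: "'i \<Rightarrow> 'v"

definition wf_network :: "('v, 'e, 'i) network \<Rightarrow> bool" where
  "wf_network N \<longleftrightarrow> finite (verts N) \<and> finite (edges N) \<and> finite (ods N) \<and>
     (\<forall>e\<in>edges N. etail N e \<in> verts N \<and> ehead N e \<in> verts N) \<and>
     (\<forall>i\<in>ods N. orig N i \<in> verts N \<and> dest N i \<in> verts N)"

definition pverts :: "('v, 'e, 'i) network \<Rightarrow> 'v \<Rightarrow> 'e list \<Rightarrow> 'v list" where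
  "pverts N u p = u # map (ehead N) p"

definition is_simple_path :: "('v, 'e, 'i) network \<Rightarrow> 'v \<Rightarrow> 'v \<Rightarrow> 'e list \<Rightarrow> bool" where
  "is_simple_path N u v p \<longleftrightarrow> set p \<subseteq> edges N \<and>
     (\<forall>k < length p. etail N (p ! k) = pverts N u p ! k) \<and>
     distinct (pverts N u p) \<and> last (pverts N u p) = v"

definition Paths :: "('v, 'e, 'i) network \<Rightarrow> 'i \<Rightarrow> 'e list set" where
  "Paths N i = {p. is_simple_path N (orig N i) (dest N i) p}"

definition feasible :: "('v, 'e, 'i) network \<Rightarrow> ('i \<Rightarrow> real) \<Rightarrow> ('i \<Rightarrow> 'e list \<Rightarrow> real) \<Rightarrow> bool" where
  "feasible N \<mu> f \<longleftrightarrow> (\<forall>i\<in>ods N. \<forall>p\<in>Paths N i. f i p \<ge> 0) \<and>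
     (\<forall>i\<in>ods N. (\<Sum>p\<in>Paths N i. f i p) = \<mu> i)"

definition load :: "('v, 'e, 'i) network \<Rightarrow> ('i \<Rightarrow> 'e list \<Rightarrow> real) \<Rightarrow> 'e \<Rightarrow> real" where
  "load N f e = (\<Sum>i\<in>ods N. \<Sum>p\<in>Paths N i. if e \<in> set p then f i p else 0)"

definition path_cost :: "('v, 'e, 'i) network \<Rightarrow> ('e \<Rightarrow> real \<Rightarrow> real) \<Rightarrow>
    ('i \<Rightarrow> 'e list \<Rightarrow> real) \<Rightarrow> 'e list \<Rightarrow> real" where
  "path_cost N c f p = (\<Sum>e\<leftarrow>p. c e (load N f e))"

definition wardrop :: "('v, 'e, 'i) network \<Rightarrow> ('e \<Rightarrow> real \<Rightarrow> real) \<Rightarrow> ('i \<Rightarrow> real) \<Rightarrow>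
    ('i \<Rightarrow> 'e list \<Rightarrow> real) \<Rightarrow> bool" where
  "wardrop N c \<mu> f \<longleftrightarrow> feasible N \<mu> f \<and>
     (\<forall>i\<in>ods N. \<forall>p\<in>Paths N i. \<forall>p'\<in>Paths N i. f i p > 0 \<longrightarrow> path_cost N c f p \<le> path_cost N c f p')"

definition total_cost :: "('v, 'e, 'i) network \<Rightarrow> ('e \<Rightarrow> real \<Rightarrow> real) \<Rightarrow>
    ('i \<Rightarrow> 'e list \<Rightarrow> real) \<Rightarrow> real" where
  "total_cost N c f = (\<Sum>i\<in>ods N. \<Sum>p\<in>Paths N i. f i p * path_cost N c f p)"

definition system_opt :: "('v, 'e, 'i) network \<Rightarrow> ('e \<Rightarrow> real \<Rightarrow> real) \<Rightarrow> ('i \<Rightarrow> real) \<Rightarrow>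
    ('i \<Rightarrow> 'e list \<Rightarrow> real) \<Rightarrow> bool" where
  "system_opt N c \<mu> f \<longleftrightarrow> feasible N \<mu> f \<and>
     (\<forall>g. feasible N \<mu> g \<longrightarrow> total_cost N c f \<le> total_cost N c g)"

definition demand :: "('v, 'e, 'i) network \<Rightarrow> ('i \<Rightarrow> real) \<Rightarrow> bool" where
  "demand N \<mu> \<longleftrightarrow> (\<forall>i\<in>ods N. \<mu> i \<ge> 0)"

definition SO_Paths :: "('v, 'e, 'i) network \<Rightarrow> ('e \<Rightarrow> real \<Rightarrow> real) \<Rightarrow> 'i \<Rightarrow> 'e list set" where
  "SO_Paths N c i = {p \<in> Paths N i. \<exists>\<mu> f. demand N \<mu> \<and> system_opt N c \<mu> f \<and> f i p > 0}"

definition tolled :: "('e \<Rightarrow> real \<Rightarrow> real) \<Rightarrow> ('e \<Rightarrow> real) \<Rightarrow> 'e \<Rightarrow> real \<Rightarrow> real" where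
  "tolled c \<tau> e x = c e x + \<tau> e"

definition DIOT :: "('v, 'e, 'i) network \<Rightarrow> ('e \<Rightarrow> real \<Rightarrow> real) \<Rightarrow> ('e \<Rightarrow> real) \<Rightarrow> bool" where
  "DIOT N c \<tau> \<longleftrightarrow> (\<forall>\<mu> f. demand N \<mu> \<longrightarrow> wardrop N (tolled c \<tau>) \<mu> f \<longrightarrow> system_opt N c \<mu> f)"

text \<open>x^beta for x \<ge> 0, beta \<ge> 0, with the convention x^0 = 1 (powr has 0 powr 0 = 0).\<close>
definition rpow :: "real \<Rightarrow> real \<Rightarrow> real" where
  "rpow x \<beta> = (if \<beta> = 0 then 1 else x powr \<beta>)"

end

theory Submission
  imports Defs "HOL-Analysis.Analysis"
begin

text \<open>The marginal cost of an edge, (x c_e(x))' = t_e + (\<beta>+1) a_e x^\<beta>, equals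
  (\<beta>+1) (c_e(x) + \<tau>_e - \<pi>_e) with the path-additive term \<pi>_e = \<tau>_e + \<beta>/(\<beta>+1) t_e.
  Let f be an equilibrium of the tolled game and g a system optimum for the same demand, which
  exists by compactness. The variational inequality of f, tested against g, bounds the tolled
  costs; g uses only paths of P^*, which minimise the \<pi>-length by hypothesis, so g carries no
  more \<pi>-weight than f. Together, the marginal costs at f satisfy the variational inequality
  against g, and convexity of x c_e(x) turns this into L(f) \<le> L(g).\<close>

lemma rpow_mult_self:
  assumes "0 \<le> x" "0 \<le> b"
  shows "x * rpow x b = x powr (b + 1)"
proof (cases "x = 0")
  case False
  with assms show ?thesis by (simp add: rpow_def powr_add)
qed (simp add: rpow_def)

lemma powr_above_tangent:
  fixes x y q :: real
  assumes "1 \<le> q" "0 < x" "0 \<le> y"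
  shows "q * x powr (q - 1) * (y - x) \<le> y powr q - x powr q"
proof (cases "y = 0")
  case True
  have "x powr q = x powr (q - 1) * x"
    using assms by (simp add: powr_diff)
  with assms True show ?thesis
    by (simp add: algebra_simps mult_left_mono)
next
  case False
  have "((\<lambda>z. z powr q) has_field_derivative q * x powr (q - 1)) (at x within {0<..})"
    using assms by (auto intro!: derivative_eq_intros)
  with assms False show ?thesis
    by (intro convex_on_imp_above_tangent[OF powr_convex]) (auto simp: interior_open mult_ac)
qed

lemma rpow_above_tangent:
  assumes "0 \<le> x" "0 \<le> y" "0 \<le> b"
  shows "(b + 1) * rpow x b * (y - x) \<le> y * rpow y b - x * rpow x b"
proof (cases "x = 0")
  case True
  with assms show ?thesis by (simp add: rpow_def)
next
  case False
  then have "(b + 1) * rpow x b * (y - x) \<le> y powr (b + 1) - x powr (b + 1)"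
    using powr_above_tangent[of "b + 1" x y] assms by (simp add: rpow_def)
  also have "\<dots> = y * rpow y b - x * rpow x b"
    using assms by (simp add: rpow_mult_self)
  finally show ?thesis .
qed

lemma Paths_distinct: "p \<in> Paths N i \<Longrightarrow> distinct p"
  by (auto simp: Paths_def is_simple_path_def pverts_def distinct_map)

lemma Paths_subset_edges: "p \<in> Paths N i \<Longrightarrow> set p \<subseteq> edges N"
  by (simp add: Paths_def is_simple_path_def)

lemma finite_Paths:
  assumes "wf_network N"
  shows "finite (Paths N i)"
proof -
  have fin: "finite (edges N)"
    using assms by (simp add: wf_network_def)
  have "Paths N i \<subseteq> {p. set p \<subseteq> edges N \<and> length p \<le> card (edges N)}"
  proof
    fix p assume p: "p \<in> Paths N i"
    have "length p = card (set p)"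
      using Paths_distinct[OF p] by (simp add: distinct_card)
    also have "\<dots> \<le> card (edges N)"
      using Paths_subset_edges[OF p] by (rule card_mono[OF fin])
    finally show "p \<in> {p. set p \<subseteq> edges N \<and> length p \<le> card (edges N)}"
      using Paths_subset_edges[OF p] by simp
  qed
  then show ?thesis
    using finite_lists_length_le[OF fin] by (rule finite_subset)
qed

lemma load_nonneg: "feasible N \<mu> f \<Longrightarrow> 0 \<le> load N f e"
  unfolding load_def feasible_def by (auto intro!: sum_nonneg)

lemma sum_flow_path_weights:
  assumes "wf_network N"
  shows "(\<Sum>i\<in>ods N. \<Sum>p\<in>Paths N i. f i p * (\<Sum>e\<leftarrow>p. w e)) = (\<Sum>e\<in>edges N. w e * load N f e)"
proof -
  have fin: "finite (edges N)"
    using assms by (simp add: wf_network_def)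
  have path: "f i p * (\<Sum>e\<leftarrow>p. w e) = (\<Sum>e\<in>edges N. w e * (if e \<in> set p then f i p else 0))"
    if "p \<in> Paths N i" for i p
  proof -
    have "(\<Sum>e\<leftarrow>p. w e) = (\<Sum>e\<in>set p. w e)"
      using Paths_distinct[OF that] by (simp add: sum_list_distinct_conv_sum_set)
    also have "\<dots> = (\<Sum>e\<in>edges N. if e \<in> set p then w e else 0)"
      using Paths_subset_edges[OF that] fin by (simp add: sum.If_cases Int_absorb1)
    finally show ?thesis
      by (simp add: sum_distrib_left if_distrib mult.commute cong: if_cong)
  qed
  have "(\<Sum>i\<in>ods N. \<Sum>p\<in>Paths N i. f i p * (\<Sum>e\<leftarrow>p. w e))
      = (\<Sum>i\<in>ods N. \<Sum>e\<in>edges N. \<Sum>p\<in>Paths N i. w e * (if e \<in> set p then f i p else 0))"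
    by (simp add: path sum.swap[where A = "Paths N _"])
  also have "\<dots> = (\<Sum>e\<in>edges N. w e * load N f e)"
    by (subst sum.swap) (simp add: load_def sum_distrib_left)
  finally show ?thesis .
qed

lemma total_cost_eq_sum_edges:
  assumes "wf_network N"
  shows "total_cost N c f = (\<Sum>e\<in>edges N. c e (load N f e) * load N f e)"
  using sum_flow_path_weights[OF assms, of f "\<lambda>e. c e (load N f e)"]
  by (simp add: total_cost_def path_cost_def)

lemma sum_mult_le_of_support_minimal:
  fixes f g w :: "'p \<Rightarrow> real"
  assumes "finite P" and f: "\<And>p. p \<in> P \<Longrightarrow> 0 \<le> f p" and g: "\<And>p. p \<in> P \<Longrightarrow> 0 \<le> g p"
    and sums: "sum f P = sum g P"
    and minimal: "\<And>p q. p \<in> P \<Longrightarrow> 0 < f p \<Longrightarrow> q \<in> P \<Longrightarrow> w p \<le> w q"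
  shows "(\<Sum>p\<in>P. w p * f p) \<le> (\<Sum>p\<in>P. w p * g p)"
proof (cases "\<exists>p\<in>P. 0 < f p")
  case True
  then obtain p0 where p0: "p0 \<in> P" "0 < f p0" by blast
  have "(\<Sum>p\<in>P. w p * f p) = (\<Sum>p\<in>P. w p0 * f p)"
  proof (rule sum.cong)
    fix p assume p: "p \<in> P"
    show "w p * f p = w p0 * f p"
    proof (cases "0 < f p")
      case True
      with minimal p p0 have "w p = w p0" by (meson order_antisym)
      then show ?thesis by simp
    qed (use f[OF p] in simp)
  qed simp
  also have "\<dots> = (\<Sum>p\<in>P. w p0 * g p)"
    using sums by (simp add: sum_distrib_left[symmetric])
  also have "\<dots> \<le> (\<Sum>p\<in>P. w p * g p)"
    using g minimal p0 by (intro sum_mono mult_right_mono) auto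
  finally show ?thesis .
next
  case False
  then have "\<forall>p\<in>P. f p = 0"
    using f by force
  moreover from this have "\<forall>p\<in>P. g p = 0"
    using sums g \<open>finite P\<close> by (simp add: sum_nonneg_eq_0_iff)
  ultimately show ?thesis by simp
qed

lemma edge_sum_le_of_support_minimal:
  assumes "wf_network N" "feasible N \<mu> f" "feasible N \<mu> g"
    and minimal: "\<And>i p p'. i \<in> ods N \<Longrightarrow> p \<in> Paths N i \<Longrightarrow> 0 < f i p \<Longrightarrow> p' \<in> Paths N i \<Longrightarrow>
                    (\<Sum>e\<leftarrow>p. w e) \<le> (\<Sum>e\<leftarrow>p'. w e)"
  shows "(\<Sum>e\<in>edges N. w e * load N f e) \<le> (\<Sum>e\<in>edges N. w e * load N g e)"
proof -
  have "(\<Sum>i\<in>ods N. \<Sum>p\<in>Paths N i. (\<Sum>e\<leftarrow>p. w e) * f i p)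
      \<le> (\<Sum>i\<in>ods N. \<Sum>p\<in>Paths N i. (\<Sum>e\<leftarrow>p. w e) * g i p)"
    using assms finite_Paths[OF assms(1)]
    by (intro sum_mono sum_mult_le_of_support_minimal) (auto simp: feasible_def)
  then show ?thesis
    using sum_flow_path_weights[OF assms(1), of _ w] by (simp add: mult.commute)
qed

lemma wardrop_variational_inequality:
  assumes "wf_network N" "wardrop N c \<mu> f" "feasible N \<mu> g"
  shows "(\<Sum>e\<in>edges N. c e (load N f e) * load N f e) \<le> (\<Sum>e\<in>edges N. c e (load N f e) * load N g e)"
  using assms by (intro edge_sum_le_of_support_minimal) (auto simp: wardrop_def path_cost_def)

lemma continuous_map_attains_inf:
  fixes F :: "'a \<Rightarrow> real"
  assumes "compactin X K" "K \<noteq> {}" "continuous_map X euclideanreal F"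
  shows "\<exists>x\<in>K. \<forall>y\<in>K. F x \<le> F y"
proof -
  have "compact (F ` K)"
    using image_compactin[OF assms(1,3)] by simp
  then show ?thesis
    using compact_attains_inf[of "F ` K"] assms(2) by auto
qed

lemma compactin_feasible_flows:
  fixes N :: "('v, 'e, 'i) network"
  assumes "wf_network N"
  defines "S \<equiv> Sigma (ods N) (Paths N)"
  shows "compactin (product_topology (\<lambda>_. euclideanreal) S)
           ((\<lambda>f. restrict (case_prod f) S) ` {f. feasible N \<mu> f})"
proof -
  define T where "T = product_topology (\<lambda>_::'i \<times> 'e list. euclideanreal) S"
  define H where "H G = (\<Sum>i\<in>ods N. \<bar>(\<Sum>p\<in>Paths N i. G (i, p)) - \<mu> i\<bar>)" for G
  define box where "box = PiE S (\<lambda>ip. {0..\<mu> (fst ip)})"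
  have fin: "finite (ods N)" "\<And>i. finite (Paths N i)"
    using assms(1) finite_Paths[OF assms(1)] by (auto simp: wf_network_def)
  have proj: "continuous_map T euclideanreal (\<lambda>G. G ip)" if "ip \<in> S" for ip
    using continuous_map_product_projection[OF that] by (simp add: T_def)
  have "continuous_map T euclideanreal H"
    unfolding H_def using fin
    by (intro continuous_map_sum continuous_map_real_abs continuous_map_diff proj
        continuous_map_const[THEN iffD2]) (auto simp: S_def)
  then have "closedin T {G \<in> topspace T. H G \<in> {0}}"
    by (rule closedin_continuous_map_preimage) simp
  moreover have "compactin T box"
    by (simp add: T_def box_def compactin_PiE)
  ultimately have "compactin T ({G \<in> topspace T. H G \<in> {0}} \<inter> box)"
    by (rule closed_Int_compactin)
  moreover have "{G \<in> topspace T. H G \<in> {0}} \<inter> box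
      = (\<lambda>f. restrict (case_prod f) S) ` {f. feasible N \<mu> f}"
  proof (intro equalityI subsetI)
    fix G assume G: "G \<in> {G \<in> topspace T. H G \<in> {0}} \<inter> box"
    then have "\<forall>i\<in>ods N. \<bar>(\<Sum>p\<in>Paths N i. G (i, p)) - \<mu> i\<bar> = 0"
      using fin by (simp add: H_def sum_nonneg_eq_0_iff)
    with G have "feasible N \<mu> (curry G)" "G = restrict (case_prod (curry G)) S"
      by (auto simp: feasible_def S_def box_def PiE_def Pi_def extensional_def)
    then show "G \<in> (\<lambda>f. restrict (case_prod f) S) ` {f. feasible N \<mu> f}"
      by blast
  next
    fix G assume "G \<in> (\<lambda>f. restrict (case_prod f) S) ` {f. feasible N \<mu> f}"
    then obtain f where f: "feasible N \<mu> f" and G: "G = restrict (case_prod f) S"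
      by blast
    have "f i p \<le> \<mu> i" if "i \<in> ods N" "p \<in> Paths N i" for i p
      using f that fin member_le_sum[of p "Paths N i" "f i"] by (auto simp: feasible_def)
    with f G show "G \<in> {G \<in> topspace T. H G \<in> {0}} \<inter> box"
      by (auto simp: T_def H_def S_def box_def feasible_def)
  qed
  ultimately show ?thesis
    by (simp add: T_def)
qed

locale bpr_game =
  fixes N :: "('v, 'e, 'i) network"
    and c :: "'e \<Rightarrow> real \<Rightarrow> real"
    and t a :: "'e \<Rightarrow> real"
    and \<beta> :: real
  assumes wf: "wf_network N"
    and exponent_nonneg: "0 \<le> \<beta>"
    and coeffs_nonneg: "\<And>e. e \<in> edges N \<Longrightarrow> 0 \<le> t e \<and> 0 \<le> a e"
    and cost_eq: "\<And>e x. e \<in> edges N \<Longrightarrow> 0 \<le> x \<Longrightarrow> c e x = t e + a e * rpow x \<beta>"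
begin

lemma edge_cost_above_tangent:
  assumes "e \<in> edges N" "0 \<le> x" "0 \<le> y"
  shows "(t e + (\<beta> + 1) * a e * rpow x \<beta>) * (y - x) \<le> c e y * y - c e x * x"
proof -
  have "a e * ((\<beta> + 1) * rpow x \<beta> * (y - x)) \<le> a e * (y * rpow y \<beta> - x * rpow x \<beta>)"
    using rpow_above_tangent[OF assms(2,3) exponent_nonneg] coeffs_nonneg[OF assms(1)]
    by (intro mult_left_mono) auto
  with assms show ?thesis
    by (simp add: cost_eq algebra_simps)
qed

lemma system_opt_exists:
  assumes "feasible N \<mu> f"
  shows "\<exists>g. system_opt N c \<mu> g"
proof -
  define S where "S = Sigma (ods N) (Paths N)"
  define T where "T = product_topology (\<lambda>_::'i \<times> 'e list. euclideanreal) S"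
  define vec where "vec g = restrict (case_prod g) S" for g :: "'i \<Rightarrow> 'e list \<Rightarrow> real"
  define load_vec where "load_vec G e = (\<Sum>ip\<in>{ip \<in> S. e \<in> set (snd ip)}. G ip :: real)" for G e
  \<comment> \<open>The absolute value keeps \<phi> continuous on all of \<real>; only x \<ge> 0 matters.\<close>
  define \<phi> where "\<phi> e x = t e * x + a e * \<bar>x\<bar> powr (\<beta> + 1)" for e x
  define F where "F G = (\<Sum>e\<in>edges N. \<phi> e (load_vec G e))" for G
  have fin: "finite (ods N)" "finite (edges N)" "finite S"
    using wf finite_Paths[OF wf] by (auto simp: wf_network_def S_def)
  have proj: "continuous_map T euclideanreal (\<lambda>G. G ip)" if "ip \<in> S" for ip
    using continuous_map_product_projection[OF that] by (simp add: T_def)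
  have load_vec_cont: "continuous_map T euclideanreal (\<lambda>G. load_vec G e)" for e
    unfolding load_vec_def using fin(3) proj by (intro continuous_map_sum) auto
  have \<phi>_cont: "continuous_map euclideanreal euclideanreal (\<phi> e)" for e
    unfolding \<phi>_def using exponent_nonneg by (auto intro!: continuous_intros continuous_on_powr')
  have "continuous_map T euclideanreal (\<lambda>G. \<phi> e (load_vec G e))" for e
    using continuous_map_compose[OF load_vec_cont \<phi>_cont] by (simp add: o_def)
  then have "continuous_map T euclideanreal F"
    unfolding F_def using fin(2) by (intro continuous_map_sum)
  moreover have "compactin T (vec ` {g. feasible N \<mu> g})"
    using compactin_feasible_flows[OF wf] by (simp add: T_def vec_def S_def)
  moreover have "vec ` {g. feasible N \<mu> g} \<noteq> {}"
    using assms by blast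
  ultimately obtain G
    where "G \<in> vec ` {g. feasible N \<mu> g}" "\<forall>G'\<in>vec ` {g. feasible N \<mu> g}. F G \<le> F G'"
    using continuous_map_attains_inf by blast
  then obtain g where g: "feasible N \<mu> g" "\<And>h. feasible N \<mu> h \<Longrightarrow> F (vec g) \<le> F (vec h)"
    by blast
  have "total_cost N c h = F (vec h)" if "feasible N \<mu> h" for h
  proof -
    have "load_vec (vec h) e = load N h e" for e
    proof -
      have "load_vec (vec h) e = (\<Sum>(i, p)\<in>S. if e \<in> set p then h i p else 0)"
        unfolding load_vec_def using fin(3) by (simp add: sum.inter_filter vec_def split_beta)
      also have "\<dots> = load N h e"
        using fin finite_Paths[OF wf] by (simp add: S_def sum.Sigma load_def)
      finally show ?thesis .
    qed
    moreover have "c e x * x = \<phi> e x" if "e \<in> edges N" "0 \<le> x" for e x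
    proof -
      have "c e x * x = t e * x + a e * (x * rpow x \<beta>)"
        using that by (simp add: cost_eq algebra_simps)
      with that show ?thesis
        by (simp add: rpow_mult_self exponent_nonneg \<phi>_def)
    qed
    ultimately show ?thesis
      using load_nonneg[OF that] by (simp add: total_cost_eq_sum_edges[OF wf] F_def)
  qed
  with g show ?thesis
    unfolding system_opt_def by auto
qed

lemma total_cost_le_of_tolled_wardrop:
  assumes toll: "\<forall>i\<in>ods N. \<forall>p\<in>SO_Paths N c i. \<forall>p'\<in>Paths N i.
           (\<Sum>e\<leftarrow>p. \<tau> e + \<beta> / (\<beta> + 1) * t e) \<le> (\<Sum>e\<leftarrow>p'. \<tau> e + \<beta> / (\<beta> + 1) * t e)"
    and "demand N \<mu>" "wardrop N (tolled c \<tau>) \<mu> f" "system_opt N c \<mu> g"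
  shows "total_cost N c f \<le> total_cost N c g"
proof -
  define \<pi> where "\<pi> e = \<tau> e + \<beta> / (\<beta> + 1) * t e" for e
  define x where "x e = load N f e" for e
  define y where "y e = load N g e" for e
  have f: "feasible N \<mu> f" and g: "feasible N \<mu> g"
    using assms by (auto simp: wardrop_def system_opt_def)
  have x: "0 \<le> x e" and y: "0 \<le> y e" for e
    using load_nonneg[OF f] load_nonneg[OF g] by (auto simp: x_def y_def)
  have marginal: "t e + (\<beta> + 1) * a e * rpow (x e) \<beta> = (\<beta> + 1) * (tolled c \<tau> e (x e) - \<pi> e)"
    if "e \<in> edges N" for e
  proof -
    have "\<beta> + 1 \<noteq> 0"
      using exponent_nonneg by simp
    with that x show ?thesis
      by (simp add: tolled_def \<pi>_def cost_eq field_simps)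
  qed
  have "(\<Sum>e\<in>edges N. tolled c \<tau> e (x e) * x e) \<le> (\<Sum>e\<in>edges N. tolled c \<tau> e (x e) * y e)"
    using wardrop_variational_inequality[OF wf assms(3) g] by (simp add: x_def y_def)
  moreover have "(\<Sum>e\<in>edges N. \<pi> e * y e) \<le> (\<Sum>e\<in>edges N. \<pi> e * x e)"
    unfolding x_def y_def
  proof (rule edge_sum_le_of_support_minimal[OF wf g f])
    fix i p p' assume "i \<in> ods N" "p \<in> Paths N i" "0 < g i p" "p' \<in> Paths N i"
    with toll assms(2,4) show "(\<Sum>e\<leftarrow>p. \<pi> e) \<le> (\<Sum>e\<leftarrow>p'. \<pi> e)"
      by (auto simp: SO_Paths_def \<pi>_def)
  qed
  ultimately have "0 \<le> (\<Sum>e\<in>edges N. (tolled c \<tau> e (x e) - \<pi> e) * (y e - x e))"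
    by (simp add: left_diff_distrib right_diff_distrib sum_subtractf)
  then have "0 \<le> (\<beta> + 1) * (\<Sum>e\<in>edges N. (tolled c \<tau> e (x e) - \<pi> e) * (y e - x e))"
    using exponent_nonneg by simp
  also have "\<dots> = (\<Sum>e\<in>edges N. (t e + (\<beta> + 1) * a e * rpow (x e) \<beta>) * (y e - x e))"
    unfolding sum_distrib_left by (intro sum.cong refl) (metis marginal mult.assoc)
  also have "\<dots> \<le> (\<Sum>e\<in>edges N. c e (y e) * y e - c e (x e) * x e)"
    using x y by (intro sum_mono edge_cost_above_tangent)
  finally show ?thesis
    by (simp add: total_cost_eq_sum_edges[OF wf] sum_subtractf x_def y_def)
qed

end

theorem theorem2:
  fixes N :: "('v, 'e, 'i) network"
    and c :: "'e \<Rightarrow> real \<Rightarrow> real"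
    and t a \<tau> :: "'e \<Rightarrow> real"
    and \<beta> :: real
  assumes "wf_network N"
    and "\<beta> \<ge> 0"
    and "\<forall>e\<in>edges N. t e \<ge> 0 \<and> a e \<ge> 0"
    and "\<forall>e\<in>edges N. \<forall>x\<ge>0. c e x = t e + a e * rpow x \<beta>"
    and "\<forall>i\<in>ods N. \<forall>p\<in>SO_Paths N c i. \<forall>p'\<in>Paths N i.
           (\<Sum>e\<leftarrow>p. \<tau> e + \<beta> / (\<beta> + 1) * t e) \<le> (\<Sum>e\<leftarrow>p'. \<tau> e + \<beta> / (\<beta> + 1) * t e)"
  shows "DIOT N c \<tau>"
  unfolding DIOT_def
proof (intro allI impI)
  interpret bpr_game N c t a \<beta>
    using assms(1-4) by unfold_locales auto
  fix \<mu> f assume demand: "demand N \<mu>" and equilibrium: "wardrop N (tolled c \<tau>) \<mu> f"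
  then have "feasible N \<mu> f"
    by (simp add: wardrop_def)
  then obtain g where opt: "system_opt N c \<mu> g"
    using system_opt_exists by blast
  then have "total_cost N c f \<le> total_cost N c g"
    using total_cost_le_of_tolled_wardrop[OF assms(5) demand equilibrium] by blast
  with opt \<open>feasible N \<mu> f\<close> show "system_opt N c \<mu> f"
    unfolding system_opt_def by (meson order_trans)
qed

end
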